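(* Let $(X,d^\star)$ be a $\star$-metric space such that every infinite subset of $X$ has an $\omega$-accumulation point in the topological space $(X,\mathscr{T}_{d^\star})$. Then $(X,d^\star)$ is totally bounded.
   Context: A $t$-definer is a function $\star:[0,\infty)\times[0,\infty)\to[0,\infty)$ such that for all $a,b,c\ge 0$: $a\star b=b\star a$; $a\star(b\star c)=(a\star b)\star c$; if $a\le b$ then $a\star c\le b\star c$; $a\star 0=a$; and $\star$ is continuous in its first variable with respect to the Euclidean topology. Given a nonempty set $X$ and a $t$-definer $\star$, a $\star$-metric on $X$ is a function $d^\star:X\times X\to[0,\infty)$ such that for all $x,y,z\in X$: $d^\star(x,y)=0$ iff $x=y$; $d^\star(x,y)=d^\star(y,x)$; and $d^\star(x,y)\le d^\star(x,z)\star d^\star(z,y)$; $(X,d^\star)$ is a $\star$-metric space. Put $B_{d^\star}(a,r)=\{x\in X: d^\star(a,x)<r\}$ and let $\mathscr{T}_{d^\star}$ be the topology consisting of all $U\subseteq X$ such that for each $a\in U$ some $B_{d^\star}(a,r)$, $r>0$, is contained in $U$. A point $x$ is an $\omega$-accumulation point of a set $A$ if every neighborhood of $x$ contains infinitely many points of $A$. $(X,d^\star)$ is totally bounded if for every $\epsilon>0$ there is a finite set $F\subseteq X$ with $X=\bigcup_{x\in F}B_{d^\star}(x,\epsilon)$. *)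

theory Defs
  imports "HOL-Analysis.Analysis"
begin

(* t-definer: an operation on [0,\<infinity>); values outside [0,\<infinity>) are irrelevant *)
definition t_definer :: "(real \<Rightarrow> real \<Rightarrow> real) \<Rightarrow> bool" where
  "t_definer st \<longleftrightarrow>
     (\<forall>a\<ge>0. \<forall>b\<ge>0. st a b \<ge> 0) \<and>
     (\<forall>a\<ge>0. \<forall>b\<ge>0. st a b = st b a) \<and>
     (\<forall>a\<ge>0. \<forall>b\<ge>0. \<forall>c\<ge>0. st a (st b c) = st (st a b) c) \<and>
     (\<forall>a\<ge>0. \<forall>b\<ge>0. \<forall>c\<ge>0. a \<le> b \<longrightarrow> st a c \<le> st b c) \<and>
     (\<forall>a\<ge>0. st a 0 = a) \<and>
     (\<forall>c\<ge>0. continuous_on {0..} (\<lambda>a. st a c))"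

definition star_metric :: "'a set \<Rightarrow> (real \<Rightarrow> real \<Rightarrow> real) \<Rightarrow> ('a \<Rightarrow> 'a \<Rightarrow> real) \<Rightarrow> bool" where
  "star_metric X st d \<longleftrightarrow> X \<noteq> {} \<and> t_definer st \<and>
     (\<forall>x\<in>X. \<forall>y\<in>X. d x y \<ge> 0) \<and>
     (\<forall>x\<in>X. \<forall>y\<in>X. d x y = 0 \<longleftrightarrow> x = y) \<and>
     (\<forall>x\<in>X. \<forall>y\<in>X. d x y = d y x) \<and>
     (\<forall>x\<in>X. \<forall>y\<in>X. \<forall>z\<in>X. d x y \<le> st (d x z) (d z y))"

definition sball :: "'a set \<Rightarrow> ('a \<Rightarrow> 'a \<Rightarrow> real) \<Rightarrow> 'a \<Rightarrow> real \<Rightarrow> 'a set" where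
  "sball X d a r = {x\<in>X. d a x < r}"

definition sopen :: "'a set \<Rightarrow> ('a \<Rightarrow> 'a \<Rightarrow> real) \<Rightarrow> 'a set \<Rightarrow> bool" where
  "sopen X d U \<longleftrightarrow> U \<subseteq> X \<and> (\<forall>a\<in>U. \<exists>r>0. sball X d a r \<subseteq> U)"

definition omega_acc :: "'a set \<Rightarrow> ('a \<Rightarrow> 'a \<Rightarrow> real) \<Rightarrow> 'a \<Rightarrow> 'a set \<Rightarrow> bool" where
  "omega_acc X d x A \<longleftrightarrow> x \<in> X \<and>
     (\<forall>N. (\<exists>U. sopen X d U \<and> x \<in> U \<and> U \<subseteq> N) \<longrightarrow> infinite (N \<inter> A))"

definition stotally_bounded :: "'a set \<Rightarrow> ('a \<Rightarrow> 'a \<Rightarrow> real) \<Rightarrow> bool" where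
  "stotally_bounded X d \<longleftrightarrow>
     (\<forall>e>0. \<exists>F. finite F \<and> F \<subseteq> X \<and> X = (\<Union>x\<in>F. sball X d x e))"

end

theory Submission
  imports Defs
begin

(* If X is not totally bounded, a greedy choice yields an infinite e-separated sequence. It has an
   \<omega>-accumulation point x; pick a term a with d(x,a) < e. Continuity of b \<mapsto> b \<star> d(x,a) at 0,
   where it takes the value d(x,a) < e, gives s > 0 such that every term b with d(x,b) < s
   satisfies d(a,b) \<le> d(a,x) \<star> d(x,b) < e. Infinitely many terms lie that close to x,
   contradicting separation. *)

lemma star_metric_t_definer: "star_metric X st d \<Longrightarrow> t_definer st"
  by (simp add: star_metric_def)

lemma star_metric_nonneg: "star_metric X st d \<Longrightarrow> x \<in> X \<Longrightarrow> y \<in> X \<Longrightarrow> 0 \<le> d x y"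
  by (simp add: star_metric_def)

lemma star_metric_self: "star_metric X st d \<Longrightarrow> x \<in> X \<Longrightarrow> d x x = 0"
  by (simp add: star_metric_def)

lemma star_metric_commute: "star_metric X st d \<Longrightarrow> x \<in> X \<Longrightarrow> y \<in> X \<Longrightarrow> d x y = d y x"
  by (simp add: star_metric_def)

lemma star_metric_triangle:
  "star_metric X st d \<Longrightarrow> x \<in> X \<Longrightarrow> y \<in> X \<Longrightarrow> z \<in> X \<Longrightarrow> d x y \<le> st (d x z) (d z y)"
  unfolding star_metric_def by blast

lemma t_definer_commute: "t_definer st \<Longrightarrow> 0 \<le> a \<Longrightarrow> 0 \<le> b \<Longrightarrow> st a b = st b a"
  by (simp add: t_definer_def)

lemma t_definer_zero_left: "t_definer st \<Longrightarrow> 0 \<le> a \<Longrightarrow> st 0 a = a"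
  unfolding t_definer_def by (metis order_refl)

lemma t_definer_continuous_on: "t_definer st \<Longrightarrow> 0 \<le> c \<Longrightarrow> continuous_on {0..} (\<lambda>a. st a c)"
  by (simp add: t_definer_def)

lemma t_definer_less_near_zero:
  assumes st: "t_definer st" and "0 \<le> u" "u < r"
  shows "\<exists>s>0. \<forall>b. 0 \<le> b \<longrightarrow> b < s \<longrightarrow> st b u < r"
proof -
  have "continuous_on {0..} (\<lambda>a. st a u)"
    using t_definer_continuous_on[OF st \<open>0 \<le> u\<close>] .
  moreover have "st 0 u = u"
    using t_definer_zero_left[OF st \<open>0 \<le> u\<close>] .
  ultimately obtain s where "s > 0"
    and s: "\<And>b. b \<in> {0..} \<Longrightarrow> dist b 0 < s \<Longrightarrow> dist (st b u) u < r - u"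
    using \<open>u < r\<close> unfolding continuous_on_iff by (metis atLeast_iff diff_gt_0_iff_gt order_refl)
  show ?thesis
  proof (intro exI[of _ s] conjI allI impI)
    fix b
    assume "0 \<le> b" "b < s"
    then have "dist (st b u) u < r - u"
      using s by (simp add: dist_real_def)
    then show "st b u < r"
      by (simp add: dist_real_def abs_less_iff)
  qed fact
qed

lemma sball_subset_sball:
  assumes M: "star_metric X st d" and "x \<in> X" and a: "a \<in> sball X d x r"
  shows "\<exists>s>0. sball X d a s \<subseteq> sball X d x r"
proof -
  have st: "t_definer st"
    using star_metric_t_definer[OF M] .
  have aX: "a \<in> X" and "d x a < r"
    using a by (auto simp: sball_def)
  have xa: "0 \<le> d x a"
    using star_metric_nonneg[OF M \<open>x \<in> X\<close> aX] .
  obtain s where "s > 0" and s: "\<And>b. 0 \<le> b \<Longrightarrow> b < s \<Longrightarrow> st b (d x a) < r"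
    using t_definer_less_near_zero[OF st xa \<open>d x a < r\<close>] by blast
  have "y \<in> sball X d x r" if "y \<in> sball X d a s" for y
  proof -
    have yX: "y \<in> X" and "d a y < s"
      using that by (auto simp: sball_def)
    have ay: "0 \<le> d a y"
      using star_metric_nonneg[OF M aX yX] .
    have "d x y \<le> st (d x a) (d a y)"
      using star_metric_triangle[OF M \<open>x \<in> X\<close> yX aX] .
    also have "\<dots> = st (d a y) (d x a)"
      using t_definer_commute[OF st xa ay] .
    also have "\<dots> < r"
      using s[OF ay \<open>d a y < s\<close>] .
    finally show ?thesis
      using yX by (simp add: sball_def)
  qed
  with \<open>s > 0\<close> show ?thesis
    by blast
qed

lemma sopen_sball:
  assumes "star_metric X st d" and "x \<in> X"
  shows "sopen X d (sball X d x r)"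
proof -
  have "sball X d x r \<subseteq> X"
    by (auto simp: sball_def)
  then show ?thesis
    unfolding sopen_def using sball_subset_sball[OF assms] by blast
qed

lemma omega_acc_infinite_sball:
  assumes M: "star_metric X st d" and acc: "omega_acc X d x A" and "r > 0"
  shows "infinite (sball X d x r \<inter> A)"
proof -
  have "x \<in> X"
    using acc by (simp add: omega_acc_def)
  then have "x \<in> sball X d x r"
    using star_metric_self[OF M] \<open>r > 0\<close> by (simp add: sball_def)
  then show ?thesis
    using acc sopen_sball[OF M \<open>x \<in> X\<close>] unfolding omega_acc_def by blast
qed

lemma omega_acc_close_pair:
  assumes M: "star_metric X st d" and acc: "omega_acc X d x A" and "e > 0"
  shows "\<exists>a\<in>A. \<exists>b\<in>A. a \<noteq> b \<and> d a b < e"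
proof -
  have xX: "x \<in> X"
    using acc by (simp add: omega_acc_def)
  obtain a where "a \<in> sball X d x e" "a \<in> A"
    using omega_acc_infinite_sball[OF M acc \<open>e > 0\<close>] by (auto dest: infinite_imp_nonempty)
  then have aX: "a \<in> X" and "x \<in> sball X d a e"
    using star_metric_commute[OF M xX] xX by (auto simp: sball_def)
  then obtain s where "s > 0" and s: "sball X d x s \<subseteq> sball X d a e"
    using sball_subset_sball[OF M aX] by blast
  obtain b where "b \<in> sball X d x s \<inter> A - {a}"
    using infinite_imp_nonempty[OF infinite_remove[OF omega_acc_infinite_sball[OF M acc \<open>s > 0\<close>]]]
    by blast
  then have "b \<in> sball X d a e"
    using s by blast
  then show ?thesis
    using \<open>a \<in> A\<close> \<open>b \<in> sball X d x s \<inter> A - {a}\<close>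
    by (intro bexI[of _ a] bexI[of _ b] conjI) (auto simp: sball_def)
qed

lemma not_stotally_bounded_separated_sequence:
  assumes "\<not> stotally_bounded X d"
  obtains e :: real and g :: "nat \<Rightarrow> 'a"
  where "e > 0" "\<And>n. g n \<in> X" "\<And>m n. m < n \<Longrightarrow> e \<le> d (g m) (g n)"
proof -
  obtain e where "e > 0"
    and uncovered: "\<And>F. finite F \<Longrightarrow> F \<subseteq> X \<Longrightarrow> X \<noteq> (\<Union>x\<in>F. sball X d x e)"
    using assms unfolding stotally_bounded_def by auto
  let ?Q = "\<lambda>(g :: nat \<Rightarrow> 'a) n y. y \<in> X \<and> (\<forall>m<n. e \<le> d (g m) y)"
  have "\<exists>g. \<forall>n::nat. ?Q g n (g n)"
  proof (rule dependent_wellorder_choice)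
    fix n and g :: "nat \<Rightarrow> 'a"
    assume "\<And>m. m < n \<Longrightarrow> ?Q g m (g m)"
    then have "X \<noteq> (\<Union>x\<in>g ` {..<n}. sball X d x e)"
      by (intro uncovered) auto
    moreover have "(\<Union>x\<in>g ` {..<n}. sball X d x e) \<subseteq> X"
      by (auto simp: sball_def)
    ultimately show "\<exists>y. ?Q g n y"
      by (auto simp: sball_def not_less)
  qed simp
  then obtain g where g: "\<forall>n. ?Q g n (g n)" ..
  show ?thesis
  proof (rule that[OF \<open>e > 0\<close>])
    show "\<And>n. g n \<in> X"
      using g by blast
    show "\<And>m n. m < n \<Longrightarrow> e \<le> d (g m) (g n)"
      using g by blast
  qed
qed

theorem theorem3p2:
  fixes X :: "'a set" and st :: "real \<Rightarrow> real \<Rightarrow> real" and d :: "'a \<Rightarrow> 'a \<Rightarrow> real"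
  assumes "star_metric X st d"
    and "\<forall>A. A \<subseteq> X \<and> infinite A \<longrightarrow> (\<exists>x\<in>X. omega_acc X d x A)"
  shows "stotally_bounded X d"
proof (rule ccontr)
  assume "\<not> stotally_bounded X d"
  then obtain e and g :: "nat \<Rightarrow> 'a" where "e > 0" and gX: "\<And>n. g n \<in> X"
    and sep: "\<And>m n. m < n \<Longrightarrow> e \<le> d (g m) (g n)"
    using not_stotally_bounded_separated_sequence by blast
  have "inj g"
  proof (rule linorder_injI)
    fix m n :: nat
    assume "m < n"
    then show "g m \<noteq> g n"
      using sep[of m n] star_metric_self[OF assms(1) gX] \<open>e > 0\<close> by auto
  qed
  then obtain x where "omega_acc X d x (range g)"
    using assms(2) gX range_inj_infinite by blast
  then obtain m n where "g m \<noteq> g n" "d (g m) (g n) < e"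
    using omega_acc_close_pair[OF assms(1) _ \<open>e > 0\<close>] by blast
  moreover have "d (g m) (g n) = d (g n) (g m)"
    using star_metric_commute[OF assms(1)] gX by auto
  ultimately show False
    using sep by (metis linorder_neqE_nat not_le)
qed

end
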